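(* Let $n\ge 1$, let $f:\mathbb{R}^n\to\mathbb{R}$ be a measurable symmetric function, let $\mathbf F,\mathbf G\in\mathcal M^n$, let $\lambda\in[0,1]$ and let $\pi$ be a permutation of $\{1,\dots,n\}$. Then: (i) $\mathcal D_f(\mathbf F)=\mathcal D_f(\pi(\mathbf F))$; (ii) $\lambda\mathcal D_f(\mathbf F)+(1-\lambda)\mathcal D_f(\mathbf G)\subset \mathcal D_f(\lambda\mathbf F+(1-\lambda)\mathbf G)$. In particular, (a) $\lambda\mathcal D_f(\mathbf F)+(1-\lambda)\mathcal D_f(\mathbf F)=\mathcal D_f(\mathbf F)$, and (b) $\mathcal D_f(\mathbf F)\cap\mathcal D_f(\mathbf G)\subset \mathcal D_f(\lambda\mathbf F+(1-\lambda)\mathbf G)$.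
   Context: Work on an atomless probability space $(\Omega,\mathcal F,\mathbb P)$. $\mathcal M$ denotes the set of cumulative distribution functions (cdfs) on $\mathbb{R}$ (identified with probability measures on $\mathcal B(\mathbb{R})$); $X\sim F$ means $X$ has cdf $F$. A function $f:\mathbb{R}^n\to\mathbb{R}$ is symmetric if $f(\mathbf x)=f(\pi(\mathbf x))$ for every $\mathbf x$ and every permutation $\pi$ of coordinates. For $\mathbf F=(F_1,\dots,F_n)\in\mathcal M^n$, the $f$-aggregation set is $\mathcal D_f(\mathbf F)=\{\text{cdf of } f(X_1,\dots,X_n): X_i\sim F_i,\ i=1,\dots,n\}$. $\pi(\mathbf F)$ is the tuple with components permuted by $\pi$. For $\mathbf F,\mathbf G\in\mathcal M^n$, $\lambda\mathbf F+(1-\lambda)\mathbf G$ is the tuple $(\lambda F_i+(1-\lambda)G_i)_{i=1}^n$ (componentwise mixture of cdfs). For sets $A,B\subset\mathcal M$, $\lambda A+(1-\lambda)B=\{\lambda H+(1-\lambda)H': H\in A, H'\in B\}$. *)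

theory Defs
  imports "HOL-Probability.Probability"
begin

definition atomless :: "'a measure \<Rightarrow> bool" where
  "atomless P \<longleftrightarrow> (\<forall>A\<in>sets P. measure P A > 0 \<longrightarrow>
      (\<exists>B\<in>sets P. B \<subseteq> A \<and> 0 < measure P B \<and> measure P B < measure P A))"

definition is_cdf :: "(real \<Rightarrow> real) \<Rightarrow> bool" where
  "is_cdf F \<longleftrightarrow> (\<exists>\<mu>. real_distribution \<mu> \<and> F = cdf \<mu>)"

definition symmetric_fun :: "(real^'n \<Rightarrow> real) \<Rightarrow> bool" where
  "symmetric_fun f \<longleftrightarrow> (\<forall>x \<pi>. bij \<pi> \<longrightarrow> f (\<chi> i. x $ \<pi> i) = f x)"

definition agg_set :: "'a measure \<Rightarrow> (real^'n \<Rightarrow> real) \<Rightarrow> ('n \<Rightarrow> real \<Rightarrow> real) \<Rightarrow> (real \<Rightarrow> real) set" where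
  "agg_set P f F = {cdf (distr P borel (\<lambda>\<omega>. f (\<chi> i. X i \<omega>))) | X.
      (\<forall>i. X i \<in> borel_measurable P \<and> cdf (distr P borel (X i)) = F i)}"

definition mix_tuple :: "real \<Rightarrow> ('n \<Rightarrow> real \<Rightarrow> real) \<Rightarrow> ('n \<Rightarrow> real \<Rightarrow> real) \<Rightarrow> ('n \<Rightarrow> real \<Rightarrow> real)" where
  "mix_tuple l F G = (\<lambda>i x. l * F i x + (1 - l) * G i x)"

definition mix_set :: "real \<Rightarrow> (real \<Rightarrow> real) set \<Rightarrow> (real \<Rightarrow> real) set \<Rightarrow> (real \<Rightarrow> real) set" where
  "mix_set l A B = {(\<lambda>x. l * H x + (1 - l) * H' x) | H H'. H \<in> A \<and> H' \<in> B}"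

end

theory Submission
  imports Defs
begin

text \<open>Statement (i) holds because a symmetric f does not see a permutation of the X_i. For (ii)
  the point is that on an atomless space every Borel probability measure on R^n is the joint law
  of some random vector, so D_f(F) is the set of cdfs of the push-forwards under f of the
  couplings of F (the laws on R^n with marginal cdfs F_i). A mixture of a coupling of F and a
  coupling of G is a coupling of the mixed marginals, and push-forward commutes with mixing.
  Realising an arbitrary law needs a uniform random variable, built by dyadic splitting from
  Sierpinski's theorem, followed by the quantile transform and a Borel embedding of R^n into R
  that interleaves digits.\<close>

section \<open>A Borel embedding of real vectors into the reals\<close>

lemma borel_measurable_vecI:
  fixes h :: "'b \<Rightarrow> real^'n"
  assumes "\<And>i. (\<lambda>\<omega>. h \<omega> $ i) \<in> borel_measurable M"
  shows "h \<in> borel_measurable M"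
proof (subst borel_measurable_euclidean_space, intro ballI)
  fix b :: "real^'n" assume "b \<in> Basis"
  then obtain i where b: "b = axis i 1" by (auto simp: Basis_vec_def)
  have "(\<lambda>x. h x \<bullet> b) = (\<lambda>x. h x $ i)" by (simp add: b inner_axis)
  then show "(\<lambda>x. h x \<bullet> b) \<in> borel_measurable M" using assms by simp
qed

lemma borel_measurable_vec_nth [measurable]: "(\<lambda>x::real^'n. x $ i) \<in> borel_measurable borel"
  by (intro borel_measurable_continuous_onI continuous_intros)

definition to_unit :: "real \<Rightarrow> real" where
  "to_unit x = arctan x / pi + 1/2"

definition from_unit :: "real \<Rightarrow> real" where
  "from_unit y = tan (pi * (y - 1/2))"

lemma to_unit_bounds: "0 < to_unit x" "to_unit x < 1"
proof -
  have "- (pi/2) < arctan x" "arctan x < pi/2" by (rule arctan_lbound, rule arctan_ubound)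
  then have "-1/2 < arctan x / pi" "arctan x / pi < 1/2" using pi_gt_zero
    by (simp_all add: field_simps)
  then show "0 < to_unit x" "to_unit x < 1" unfolding to_unit_def by linarith+
qed

lemma from_unit_to_unit [simp]: "from_unit (to_unit x) = x"
  by (simp add: from_unit_def to_unit_def tan_arctan)

lemma borel_measurable_to_unit [measurable]: "to_unit \<in> borel_measurable borel"
  unfolding to_unit_def by (intro borel_measurable_continuous_onI continuous_intros) auto

lemma borel_measurable_from_unit [measurable]: "from_unit \<in> borel_measurable borel"
  unfolding from_unit_def tan_def by (measurable; simp)

definition digit :: "real \<Rightarrow> nat \<Rightarrow> real \<Rightarrow> real" where
  "digit b k t = of_int \<lfloor>b^(k+1) * t\<rfloor> - b * of_int \<lfloor>b^k * t\<rfloor>"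

lemma borel_measurable_digit [measurable]: "digit b k \<in> borel_measurable borel"
  unfolding digit_def by measurable

lemma binary_digit_01: "digit 2 k t \<in> {0, 1}"
proof -
  let ?y = "2^k * t :: real"
  have "of_int \<lfloor>?y\<rfloor> \<le> ?y" "?y < of_int \<lfloor>?y\<rfloor> + 1"
    "of_int \<lfloor>2*?y\<rfloor> \<le> 2*?y" "2*?y < of_int \<lfloor>2*?y\<rfloor> + 1" by linarith+
  then have "\<lfloor>2*?y\<rfloor> - 2*\<lfloor>?y\<rfloor> = 0 \<or> \<lfloor>2*?y\<rfloor> - 2*\<lfloor>?y\<rfloor> = 1" by linarith
  moreover have "digit 2 k t = of_int (\<lfloor>2*?y\<rfloor> - 2*\<lfloor>?y\<rfloor>)"
    by (simp add: digit_def mult.assoc)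
  ultimately show ?thesis by auto
qed

lemma digit_expansion_sums:
  assumes b: "1 < b" and t: "0 \<le> t" "t < 1"
  shows "(\<lambda>k. digit b k t / b^(k+1)) sums t"
proof -
  define a where "a m = of_int \<lfloor>b^m * t\<rfloor> / b^m" for m
  have "\<lfloor>t\<rfloor> = 0" using t by (simp add: floor_eq_iff)
  then have "(\<Sum>k<m. digit b k t / b^(k+1)) = a m" for m
    using b by (induction m) (simp_all add: a_def digit_def field_simps)
  moreover have "a \<longlonglongrightarrow> t"
  proof (rule tendsto_sandwich[OF _ _ _ tendsto_const])
    have "(\<lambda>m. t - (1/b)^m) \<longlonglongrightarrow> t - 0"
      using b by (intro tendsto_diff tendsto_const LIMSEQ_realpow_zero) auto
    then show "(\<lambda>m. t - (1/b)^m) \<longlonglongrightarrow> t" by simp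
    have "t - (1/b)^m \<le> a m" for m
    proof -
      have "b^m * t - 1 \<le> of_int \<lfloor>b^m * t\<rfloor>" by linarith
      then have "(b^m * t - 1) / b^m \<le> a m" unfolding a_def using b by (auto intro: divide_right_mono)
      then show ?thesis using b by (simp add: field_simps power_divide)
    qed
    then show "\<forall>\<^sub>F m in sequentially. t - (1/b)^m \<le> a m" by simp
    have "a m \<le> t" for m
      using b of_int_floor_le[of "b^m * t"] by (simp add: a_def field_simps)
    then show "\<forall>\<^sub>F m in sequentially. a m \<le> t" by simp
  qed
  ultimately show ?thesis unfolding sums_def by simp
qed

lemma summable_digits_01_base4:
  fixes d :: "nat \<Rightarrow> real"
  assumes "\<And>k. d k \<in> {0, 1}"
  shows "summable (\<lambda>j. d j / 4^(j+1))" and "0 \<le> (\<Sum>j. d j / 4^(j+1))"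
    and "(\<Sum>j. d j / 4^(j+1)) \<le> 1/3"
proof -
  have d: "0 \<le> d j" "d j \<le> 1" for j using assms[of j] by auto
  have geo: "(\<lambda>j. 1 / 4^(j+1) :: real) sums (1/3)"
    using sums_mult[OF geometric_sums[of "1/4::real"], of "1/4"] by (simp add: power_divide)
  show summable: "summable (\<lambda>j. d j / 4^(j+1))"
    by (rule summable_comparison_test[OF _ sums_summable[OF geo]])
       (use d in \<open>auto intro!: exI[of _ 0] divide_right_mono\<close>)
  show "0 \<le> (\<Sum>j. d j / 4^(j+1))" by (rule suminf_nonneg[OF summable]) (simp add: d)
  have "(\<Sum>j. d j / 4^(j+1)) \<le> (\<Sum>j. 1 / 4^(j+1))"
    by (rule suminf_le[OF _ summable sums_summable[OF geo]]) (use d in \<open>auto intro!: divide_right_mono\<close>)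
  also have "\<dots> = 1/3" using geo by (simp add: sums_iff)
  finally show "(\<Sum>j. d j / 4^(j+1)) \<le> 1/3" .
qed

text \<open>A tail of digits 0 and 1 is worth at most 1/3 of a unit, so base-4 expansions with such
  digits are unique.\<close>
lemma digit_quaternary_expansion:
  fixes d :: "nat \<Rightarrow> real"
  assumes d01: "\<And>k. d k \<in> {0, 1}"
  shows "digit 4 k (\<Sum>j. d j / 4^(j+1)) = d k"
proof -
  define s where "s = (\<Sum>j. d j / 4^(j+1))"
  define S where "S m = (\<Sum>j<m. d j / 4^(j+1))" for m
  have S_int: "4^m * S m \<in> \<int>" for m
  proof (induction m)
    case (Suc m)
    have "4^Suc m * S (Suc m) = 4 * (4^m * S m) + d m"
      by (simp add: S_def field_simps)
    then show ?case using Suc d01[of m] by auto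
  qed (simp add: S_def)
  have tail: "4^m * (s - S m) = (\<Sum>j. d (j+m) / 4^(j+1))" for m
  proof -
    note summable = summable_digits_01_base4(1)[OF d01]
    have "s = (\<Sum>j. d (j+m) / 4^(j+m+1)) + S m"
      unfolding s_def S_def using summable by (intro suminf_split_initial_segment) simp
    then have "4^m * (s - S m) = 4^m * (\<Sum>j. d (j+m) / 4^(j+m+1))" by simp
    also have "\<dots> = (\<Sum>j. 4^m * (d (j+m) / 4^(j+m+1)))"
      using summable_ignore_initial_segment[OF summable, where k=m]
      by (intro suminf_mult[symmetric]) simp
    also have "\<dots> = (\<Sum>j. d (j+m) / 4^(j+1))"
      by (intro suminf_cong) (simp add: power_add field_simps)
    finally show ?thesis .
  qed
  have floor_eq: "of_int \<lfloor>4^m * s\<rfloor> = 4^m * S m" for m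
  proof -
    obtain z where z: "4^m * S m = of_int z" using S_int[of m] by (auto elim: Ints_cases)
    have "4^m * s = of_int z + 4^m * (s - S m)" using z by (simp add: algebra_simps)
    moreover have "0 \<le> 4^m * (s - S m)" "4^m * (s - S m) < 1"
      using summable_digits_01_base4(2,3)[of "\<lambda>j. d (j+m)"] d01 unfolding tail by auto
    ultimately have "\<lfloor>4^m * s\<rfloor> = z" by (simp add: floor_eq_iff)
    then show ?thesis using z by simp
  qed
  show ?thesis
    unfolding s_def[symmetric] digit_def floor_eq by (simp add: S_def field_simps)
qed

lemma ex_borel_embedding_into_real:
  obtains e :: "real^'n \<Rightarrow> real" and g :: "real \<Rightarrow> real^'n"
  where "e \<in> borel_measurable borel" "g \<in> borel_measurable borel" "\<And>x. g (e x) = x"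
proof -
  define N where "N = CARD('n)"
  obtain idx :: "'n \<Rightarrow> nat" where idx: "bij_betw idx UNIV {0..<N}"
    using ex_bij_betw_finite_nat[of "UNIV :: 'n set"] unfolding N_def by auto
  define coord where "coord = inv_into UNIV idx"
  have idx_less: "idx i < N" for i using idx by (auto simp: bij_betw_def)
  have coord_idx: "coord (idx i) = i" for i
    using idx unfolding coord_def by (simp add: bij_betw_def inv_into_f_f)
  text \<open>Interleave the binary digits of the coordinates (squeezed into (0,1)) and read them
    as base-4 digits, so that no expansion ends in a tail of maximal digits.\<close>
  define d where "d x k = digit 2 (k div N) (to_unit (x $ coord (k mod N)))" for x :: "real^'n" and k
  define e where "e x = (\<Sum>k. d x k / 4^(k+1))" for x
  define g where "g s = (\<chi> i. from_unit (\<Sum>j. digit 4 (j*N + idx i) s / 2^(j+1)))" for s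
  have "e \<in> borel_measurable borel"
    unfolding e_def d_def by measurable
  moreover have "g \<in> borel_measurable borel"
    unfolding g_def by (intro borel_measurable_vecI) simp
  moreover have "g (e x) $ i = x $ i" for x i
  proof -
    have "digit 4 (j*N + idx i) (e x) = digit 2 j (to_unit (x $ i))" for j
    proof -
      have "digit 4 (j*N + idx i) (e x) = d x (j*N + idx i)"
        unfolding e_def by (rule digit_quaternary_expansion) (unfold d_def, rule binary_digit_01)
      then show ?thesis using idx_less[of i] by (simp add: d_def coord_idx)
    qed
    then have "(\<Sum>j. digit 4 (j*N + idx i) (e x) / 2^(j+1)) = to_unit (x $ i)"
      using digit_expansion_sums[of 2 "to_unit (x $ i)"] to_unit_bounds[of "x $ i"]
      by (simp add: sums_iff)
    then show ?thesis by (simp add: g_def)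
  qed
  ultimately show ?thesis using that by (simp add: vec_eq_iff)
qed

section \<open>Random variables on atomless probability spaces\<close>

lemma le_by_half_powers:
  fixes a b :: real
  assumes "\<And>m::nat. a \<le> b + (1/2)^m"
  shows "a \<le> b"
proof (rule field_le_epsilon)
  fix \<epsilon> :: real assume "0 < \<epsilon>"
  then obtain m where "(1/2)^m < \<epsilon>" using real_arch_pow_inv[of \<epsilon> "1/2"] by auto
  then show "a \<le> b + \<epsilon>" using assms[of m] by linarith
qed

definition half_subset :: "'a measure \<Rightarrow> 'a set \<Rightarrow> 'a set" where
  "half_subset M A = (SOME B. B \<in> sets M \<and> B \<subseteq> A \<and> measure M B = measure M A / 2)"

text \<open>Cell j of level m plays the role of the dyadic interval [j/2^m, (j+1)/2^m).\<close>
fun dyadic_cell :: "'a measure \<Rightarrow> nat \<Rightarrow> nat \<Rightarrow> 'a set" where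
  "dyadic_cell M 0 j = (if j = 0 then space M else {})"
| "dyadic_cell M (Suc m) j = (if even j then half_subset M (dyadic_cell M m (j div 2))
      else dyadic_cell M m (j div 2) - half_subset M (dyadic_cell M m (j div 2)))"

definition dyadic_floor :: "'a measure \<Rightarrow> nat \<Rightarrow> 'a \<Rightarrow> real" where
  "dyadic_floor M m \<omega> = (\<Sum>j<2^m. real j * indicator (dyadic_cell M m j) \<omega>) / 2^m"

definition dyadic_uniform :: "'a measure \<Rightarrow> 'a \<Rightarrow> real" where
  "dyadic_uniform M \<omega> = (SUP m. dyadic_floor M m \<omega>)"

context prob_space
begin

lemma atomless_halve:
  assumes "atomless M" "A \<in> events" "0 < prob A"
  obtains B where "B \<in> events" "B \<subseteq> A" "0 < prob B" "prob B \<le> prob A / 2"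
proof -
  obtain B where B: "B \<in> events" "B \<subseteq> A" "0 < prob B" "prob B < prob A"
    using assms unfolding atomless_def by blast
  have "prob (A - B) = prob A - prob B" using B assms by (simp add: finite_measure_Diff)
  then show ?thesis
    using that[of B] that[of "A - B"] B assms by (cases "prob B \<le> prob A / 2") auto
qed

lemma atomless_small:
  assumes "atomless M" "A \<in> events" "0 < prob A" "0 < \<epsilon>"
  obtains B where "B \<in> events" "B \<subseteq> A" "0 < prob B" "prob B < \<epsilon>"
proof -
  have "\<exists>B\<in>events. B \<subseteq> A \<and> 0 < prob B \<and> prob B \<le> (1/2)^k" for k
  proof (induction k)
    case 0 then show ?case using assms by auto
  next
    case (Suc k)
    then obtain B where B: "B \<in> events" "B \<subseteq> A" "0 < prob B" "prob B \<le> (1/2)^k" by blast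
    then obtain C where "C \<in> events" "C \<subseteq> B" "0 < prob C" "prob C \<le> prob B / 2"
      using atomless_halve[OF assms(1)] by blast
    then show ?case using B by (intro bexI[of _ C]) auto
  qed
  moreover obtain k where "(1/2)^k < \<epsilon>" using real_arch_pow_inv[OF assms(4), of "1/2"] by auto
  ultimately show ?thesis using that le_less_trans by blast
qed

lemma ex_subset_half_sup_prob:
  assumes "E \<in> events" "0 \<le> r"
  obtains C where "C \<in> events" "C \<subseteq> E" "prob C \<le> r"
    "\<And>D. D \<in> events \<Longrightarrow> D \<subseteq> E \<Longrightarrow> prob D \<le> r \<Longrightarrow> prob D \<le> 2 * prob C"
proof -
  let ?P = "{prob D | D. D \<in> events \<and> D \<subseteq> E \<and> prob D \<le> r}"
  have bdd: "bdd_above ?P" by (auto intro!: bdd_aboveI[of _ 1])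
  have le_Sup: "prob D \<le> Sup ?P" if "D \<in> events" "D \<subseteq> E" "prob D \<le> r" for D
    using that by (intro cSup_upper[OF _ bdd]) auto
  show ?thesis
  proof (cases "Sup ?P \<le> 0")
    case True
    then show ?thesis using that[of "{}"] le_Sup assms by force
  next
    case False
    have "?P \<noteq> {}" using assms by (auto intro!: exI[of _ "{}"])
    moreover have "Sup ?P / 2 < Sup ?P" using False by simp
    ultimately obtain C where "C \<in> events" "C \<subseteq> E" "prob C \<le> r" "Sup ?P / 2 < prob C"
      by (subst (asm) less_cSup_iff[OF _ bdd]) auto
    then show ?thesis using that[of C] le_Sup by fastforce
  qed
qed

text \<open>Greedily add to the current set a subset of the rest of A of at least half the largest
  measure that keeps the total below t.\<close>
lemma greedy_subset_sequence:
  assumes A: "A \<in> events" and t: "0 \<le> t"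
  obtains Bs where "incseq Bs" "\<And>k. Bs k \<in> events" "\<And>k. Bs k \<subseteq> A" "\<And>k. prob (Bs k) \<le> t"
    "\<And>k D. D \<in> events \<Longrightarrow> D \<subseteq> A - Bs k \<Longrightarrow> prob (Bs k) + prob D \<le> t
      \<Longrightarrow> prob D \<le> 2 * (prob (Bs (Suc k)) - prob (Bs k))"
proof -
  define good where "good B C \<longleftrightarrow> C \<in> events \<and> C \<subseteq> A - B \<and> prob C \<le> t - prob B
    \<and> (\<forall>D \<in> events. D \<subseteq> A - B \<longrightarrow> prob D \<le> t - prob B \<longrightarrow> prob D \<le> 2 * prob C)" for B C
  define step where "step B = (SOME C. good B C)" for B
  have step: "good B (step B)" if "B \<in> events" "prob B \<le> t" for B
    unfolding step_def
    by (rule someI_ex, rule ex_subset_half_sup_prob[of "A - B" "t - prob B"])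
       (use A that in \<open>auto simp: good_def\<close>)
  define Bs where "Bs k = rec_nat {} (\<lambda>_ B. B \<union> step B) k" for k
  have Bs_Suc: "Bs (Suc k) = Bs k \<union> step (Bs k)" for k by (simp add: Bs_def)
  have Bs: "Bs k \<in> events \<and> Bs k \<subseteq> A \<and> prob (Bs k) \<le> t
      \<and> prob (Bs (Suc k)) = prob (Bs k) + prob (step (Bs k))" for k
  proof (induction k)
    case 0
    then show ?case using step[of "{}"] t by (simp add: Bs_def good_def)
  next
    case (Suc k)
    then have "Bs (Suc k) \<in> events" "Bs (Suc k) \<subseteq> A" "prob (Bs (Suc k)) \<le> t"
      using step[of "Bs k"] by (auto simp: Bs_Suc good_def)
    moreover from this have "prob (Bs (Suc k) \<union> step (Bs (Suc k)))
        = prob (Bs (Suc k)) + prob (step (Bs (Suc k)))"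
      using step[of "Bs (Suc k)"] by (intro finite_measure_Union) (auto simp: good_def)
    ultimately show ?case by (simp add: Bs_Suc[of "Suc k"])
  qed
  show ?thesis
  proof (rule that)
    show "incseq Bs" by (rule incseq_SucI) (simp add: Bs_Suc)
    show "Bs k \<in> events" "Bs k \<subseteq> A" "prob (Bs k) \<le> t" for k using Bs by auto
    show "prob D \<le> 2 * (prob (Bs (Suc k)) - prob (Bs k))"
      if "D \<in> events" "D \<subseteq> A - Bs k" "prob (Bs k) + prob D \<le> t" for k D
      using that Bs[of k] step[of "Bs k"] by (auto simp: good_def)
  qed
qed

text \<open>Sierpinski's theorem: the increments of the greedy sequence tend to 0, so if its limit fell
  short of t, a small set outside it would have been a candidate at every step.\<close>
lemma atomless_ex_subset_prob_eq:
  assumes at: "atomless M" and A: "A \<in> events" and t: "0 \<le> t" "t \<le> prob A"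
  obtains B where "B \<in> events" "B \<subseteq> A" "prob B = t"
proof -
  obtain Bs where inc: "incseq Bs"
    and Bs: "\<And>k. Bs k \<in> events" "\<And>k. Bs k \<subseteq> A" "\<And>k. prob (Bs k) \<le> t"
    and greedy: "\<And>k D. D \<in> events \<Longrightarrow> D \<subseteq> A - Bs k \<Longrightarrow> prob (Bs k) + prob D \<le> t
      \<Longrightarrow> prob D \<le> 2 * (prob (Bs (Suc k)) - prob (Bs k))"
    using greedy_subset_sequence[OF A t(1)] by blast
  define B where "B = (\<Union>k. Bs k)"
  have B: "B \<in> events" "B \<subseteq> A" unfolding B_def using Bs by auto
  have lim: "(\<lambda>k. prob (Bs k)) \<longlonglongrightarrow> prob B"
    unfolding B_def using Bs inc by (intro finite_Lim_measure_incseq) auto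
  then have "prob B \<le> t" using Bs(3) by (intro LIMSEQ_le_const2) auto
  moreover have "\<not> prob B < t"
  proof
    assume less: "prob B < t"
    have "prob (A - B) = prob A - prob B" using B A by (simp add: finite_measure_Diff)
    then obtain D where D: "D \<in> events" "D \<subseteq> A - B" "0 < prob D" "prob D < t - prob B"
      using atomless_small[OF at, of "A - B" "t - prob B"] less t A B by auto
    have "(\<lambda>k. 2 * (prob (Bs (Suc k)) - prob (Bs k))) \<longlonglongrightarrow> 2 * (prob B - prob B)"
      by (intro tendsto_intros lim LIMSEQ_Suc)
    moreover have "prob D \<le> 2 * (prob (Bs (Suc k)) - prob (Bs k))" for k
    proof (rule greedy)
      have "Bs k \<subseteq> B" unfolding B_def by auto
      then show "D \<subseteq> A - Bs k" "prob (Bs k) + prob D \<le> t"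
        using D B Bs(1) finite_measure_mono[of "Bs k" B] by auto
    qed (rule D(1))
    ultimately have "prob D \<le> 2 * (prob B - prob B)" by (intro LIMSEQ_le_const) auto
    then show False using D by simp
  qed
  ultimately show ?thesis using that B by fastforce
qed

lemma half_subset:
  assumes "atomless M" "A \<in> events"
  shows "half_subset M A \<in> events" "half_subset M A \<subseteq> A" "prob (half_subset M A) = prob A / 2"
proof -
  obtain B where "B \<in> events" "B \<subseteq> A" "prob B = prob A / 2"
    using atomless_ex_subset_prob_eq[OF assms, of "prob A / 2"] by auto
  then have "\<exists>B. B \<in> events \<and> B \<subseteq> A \<and> prob B = prob A / 2" by blast
  from someI_ex[OF this] show "half_subset M A \<in> events" "half_subset M A \<subseteq> A"
    "prob (half_subset M A) = prob A / 2" unfolding half_subset_def by blast+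
qed

lemma dyadic_cell_basic:
  assumes at: "atomless M"
  shows "dyadic_cell M m j \<in> events \<and> (2^m \<le> j \<longrightarrow> dyadic_cell M m j = {})
    \<and> (j < 2^m \<longrightarrow> prob (dyadic_cell M m j) = 1 / 2^m)"
proof (induction m arbitrary: j)
  case 0 then show ?case by (simp add: prob_space)
next
  case (Suc m)
  let ?C = "dyadic_cell M m (j div 2)"
  have C: "?C \<in> events" "2^m \<le> j div 2 \<longrightarrow> ?C = {}" "j div 2 < 2^m \<longrightarrow> prob ?C = 1 / 2^m"
    using Suc[of "j div 2"] by auto
  note half = half_subset[OF at C(1)]
  have "prob (?C - half_subset M ?C) = prob ?C / 2"
    using half C(1) by (simp add: finite_measure_Diff)
  moreover have "2^m \<le> j div 2 \<longleftrightarrow> 2^Suc m \<le> j" by auto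
  ultimately show ?case using C half by auto
qed

lemma dyadic_cell_in_events: "atomless M \<Longrightarrow> dyadic_cell M m j \<in> events"
  using dyadic_cell_basic by blast

lemma prob_dyadic_cell: "atomless M \<Longrightarrow> j < 2^m \<Longrightarrow> prob (dyadic_cell M m j) = 1 / 2^m"
  using dyadic_cell_basic by blast

lemma dyadic_cell_index_less: "atomless M \<Longrightarrow> \<omega> \<in> dyadic_cell M m j \<Longrightarrow> j < 2^m"
  using dyadic_cell_basic[of m j] by (cases "j < 2^m") auto

lemma dyadic_cell_subset_parent:
  "atomless M \<Longrightarrow> dyadic_cell M (Suc m) j \<subseteq> dyadic_cell M m (j div 2)"
  using half_subset[OF _ dyadic_cell_in_events] by auto

lemma dyadic_cell_disjoint:
  assumes at: "atomless M"
  shows "j \<noteq> j' \<Longrightarrow> dyadic_cell M m j \<inter> dyadic_cell M m j' = {}"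
proof (induction m arbitrary: j j')
  case (Suc m)
  show ?case
  proof (cases "j div 2 = j' div 2")
    case False
    then show ?thesis using Suc.IH[OF False] dyadic_cell_subset_parent[OF at, of m] by blast
  next
    case True
    then have "even j \<noteq> even j'" using Suc.prems
      by (metis dvd_mult_div_cancel odd_two_times_div_two_succ)
    then show ?thesis using True by auto
  qed
qed simp

lemma dyadic_cell_cover:
  assumes "\<omega> \<in> space M"
  obtains j where "\<omega> \<in> dyadic_cell M m j"
proof (induction m arbitrary: thesis)
  case 0 then show ?case using assms by simp
next
  case (Suc m)
  then obtain j where "\<omega> \<in> dyadic_cell M m j" by blast
  then show ?case
    using Suc.prems[of "2*j"] Suc.prems[of "2*j+1"]
    by (cases "\<omega> \<in> half_subset M (dyadic_cell M m j)") auto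
qed

lemma dyadic_floor_eq:
  assumes at: "atomless M" and \<omega>: "\<omega> \<in> dyadic_cell M m j"
  shows "dyadic_floor M m \<omega> = real j / 2^m"
proof -
  have indicator: "indicator (dyadic_cell M m j') \<omega> = (if j' = j then 1 else 0 :: real)" for j'
    using dyadic_cell_disjoint[OF at, of j' j m] \<omega> by (auto simp: indicator_def)
  show ?thesis using dyadic_cell_index_less[OF at \<omega>]
    unfolding dyadic_floor_def indicator by (simp add: if_distrib sum.delta cong: if_cong)
qed

lemma borel_measurable_dyadic_floor:
  assumes "atomless M"
  shows "dyadic_floor M m \<in> borel_measurable M"
proof -
  have [measurable]: "dyadic_cell M m j \<in> events" for j using dyadic_cell_in_events[OF assms] .
  show ?thesis unfolding dyadic_floor_def by measurable
qed

lemma dyadic_floor_Suc: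
  assumes at: "atomless M" and \<omega>: "\<omega> \<in> space M"
  shows "dyadic_floor M m \<omega> \<le> dyadic_floor M (Suc m) \<omega>"
    and "dyadic_floor M (Suc m) \<omega> + 1 / 2^Suc m \<le> dyadic_floor M m \<omega> + 1 / 2^m"
proof -
  obtain j where j: "\<omega> \<in> dyadic_cell M (Suc m) j" using dyadic_cell_cover[OF \<omega>] .
  then have "\<omega> \<in> dyadic_cell M m (j div 2)" using dyadic_cell_subset_parent[OF at] by blast
  then have eq: "dyadic_floor M (Suc m) \<omega> = real j / 2^Suc m"
      "dyadic_floor M m \<omega> = real (j div 2) / 2^m"
    using dyadic_floor_eq[OF at] j by auto
  have "2 * real (j div 2) \<le> real j" "real j \<le> 2 * real (j div 2) + 1" by linarith+
  moreover from this have "real j * 2^m \<le> (2 * real (j div 2) + 1) * 2^m"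
    by (intro mult_right_mono) auto
  ultimately show "dyadic_floor M m \<omega> \<le> dyadic_floor M (Suc m) \<omega>"
    "dyadic_floor M (Suc m) \<omega> + 1 / 2^Suc m \<le> dyadic_floor M m \<omega> + 1 / 2^m"
    unfolding eq by (simp_all add: field_simps)
qed

lemma dyadic_uniform_bounds:
  assumes at: "atomless M" and \<omega>: "\<omega> \<in> space M"
  shows "dyadic_floor M m \<omega> \<le> dyadic_uniform M \<omega>"
    and "dyadic_uniform M \<omega> \<le> dyadic_floor M m \<omega> + 1 / 2^m"
proof -
  have inc: "incseq (\<lambda>m. dyadic_floor M m \<omega>)"
    by (rule incseq_SucI) (rule dyadic_floor_Suc[OF at \<omega>])
  have dec: "decseq (\<lambda>m. dyadic_floor M m \<omega> + 1 / 2^m)"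
    by (rule decseq_SucI) (rule dyadic_floor_Suc[OF at \<omega>])
  have le: "dyadic_floor M p \<omega> \<le> dyadic_floor M m \<omega> + 1 / 2^m" for p m
  proof (cases "p \<le> m")
    case True
    then show ?thesis using monoD[OF inc True] by (simp add: add_increasing2)
  next
    case False
    then have "dyadic_floor M p \<omega> + 1 / 2^p \<le> dyadic_floor M m \<omega> + 1 / 2^m"
      using dec by (simp add: decseq_def)
    then show ?thesis by (smt (verit) divide_nonneg_nonneg zero_le_power)
  qed
  have bdd: "bdd_above (range (\<lambda>p. dyadic_floor M p \<omega>))"
    using le[of _ 0] by (intro bdd_aboveI[of _ "dyadic_floor M 0 \<omega> + 1"]) auto
  show "dyadic_floor M m \<omega> \<le> dyadic_uniform M \<omega>"
    unfolding dyadic_uniform_def by (rule cSUP_upper[OF _ bdd]) simp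
  show "dyadic_uniform M \<omega> \<le> dyadic_floor M m \<omega> + 1 / 2^m"
    unfolding dyadic_uniform_def by (rule cSUP_least) (auto intro: le)
qed

lemma borel_measurable_dyadic_uniform:
  assumes at: "atomless M"
  shows "dyadic_uniform M \<in> borel_measurable M"
proof (rule borel_measurable_LIMSEQ_real)
  show "dyadic_floor M m \<in> borel_measurable M" for m using borel_measurable_dyadic_floor[OF at] .
  fix \<omega> assume \<omega>: "\<omega> \<in> space M"
  have "(\<lambda>m. dyadic_uniform M \<omega> - 1 / 2^m) \<longlonglongrightarrow> dyadic_uniform M \<omega> - 0"
    by (intro tendsto_diff tendsto_const LIMSEQ_divide_realpow_zero) simp
  then have lim: "(\<lambda>m. dyadic_uniform M \<omega> - 1 / 2^m) \<longlonglongrightarrow> dyadic_uniform M \<omega>" by simp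
  have lower: "\<forall>m. dyadic_uniform M \<omega> - 1 / 2^m \<le> dyadic_floor M m \<omega>"
    using dyadic_uniform_bounds(2)[OF at \<omega>] by (simp add: diff_le_eq)
  have upper: "\<forall>m. dyadic_floor M m \<omega> \<le> dyadic_uniform M \<omega>"
    using dyadic_uniform_bounds(1)[OF at \<omega>] by blast
  show "(\<lambda>m. dyadic_floor M m \<omega>) \<longlonglongrightarrow> dyadic_uniform M \<omega>"
    by (rule tendsto_sandwich[OF always_eventually[OF lower] always_eventually[OF upper] lim tendsto_const])
qed

lemma prob_Union_dyadic_cells:
  assumes at: "atomless M" and n: "n \<le> 2^m"
  shows "prob (\<Union>j<n. dyadic_cell M m j) = real n / 2^m"
proof -
  have "prob (\<Union>j<n. dyadic_cell M m j) = (\<Sum>j<n. prob (dyadic_cell M m j))"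
    using dyadic_cell_disjoint[OF at] dyadic_cell_in_events[OF at]
    by (intro finite_measure_finite_Union) (auto simp: disjoint_family_on_def)
  also have "\<dots> = (\<Sum>j<n. 1 / 2^m)" using n by (intro sum.cong) (auto simp: at prob_dyadic_cell)
  finally show ?thesis by simp
qed

lemma dyadic_uniform_in_cell:
  assumes at: "atomless M" and \<omega>: "\<omega> \<in> dyadic_cell M m j"
  shows "real j / 2^m \<le> dyadic_uniform M \<omega>" "dyadic_uniform M \<omega> \<le> (real j + 1) / 2^m"
proof -
  have "\<omega> \<in> space M" using \<omega> sets.sets_into_space[OF dyadic_cell_in_events[OF at]] by blast
  from dyadic_uniform_bounds[OF at this, of m]
  show "real j / 2^m \<le> dyadic_uniform M \<omega>" "dyadic_uniform M \<omega> \<le> (real j + 1) / 2^m"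
    unfolding dyadic_floor_eq[OF at \<omega>] by (simp_all add: add_divide_distrib)
qed

lemma prob_dyadic_uniform_le:
  assumes at: "atomless M" and x: "0 \<le> x" "x \<le> 1"
  shows "prob {\<omega> \<in> space M. dyadic_uniform M \<omega> \<le> x} = x"
proof -
  let ?S = "{\<omega> \<in> space M. dyadic_uniform M \<omega> \<le> x}"
  let ?C = "\<lambda>m n. \<Union>j<n. dyadic_cell M m j"
  have [measurable]: "dyadic_uniform M \<in> borel_measurable M"
    using borel_measurable_dyadic_uniform[OF at] .
  have S_events: "?S \<in> events" by measurable
  have C_events: "?C m n \<in> events" for m n using dyadic_cell_in_events[OF at] by auto
  have approx: "prob ?S \<le> x + (1/2)^m \<and> x \<le> prob ?S + (1/2)^m" for m
  proof -
    define k where "k = nat \<lfloor>2^m * x\<rfloor>"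
    have "real k = of_int \<lfloor>2^m * x\<rfloor>" unfolding k_def using x by simp
    then have k: "real k \<le> 2^m * x" "2^m * x < real k + 1" by linarith+
    have "(2::real)^m * x \<le> 2^m" using x by (simp add: mult_left_le)
    then have "real k \<le> 2^m" using k by linarith
    then have k_le: "k \<le> 2^m" by (metis of_nat_le_iff of_nat_numeral of_nat_power)
    have "?C m k \<subseteq> ?S"
    proof safe
      fix \<omega> j assume "j < k" and \<omega>: "\<omega> \<in> dyadic_cell M m j"
      then show "\<omega> \<in> space M" using sets.sets_into_space[OF dyadic_cell_in_events[OF at]] by blast
      have "real j + 1 \<le> 2^m * x" using \<open>j < k\<close> k by linarith
      then have "(real j + 1) / 2^m \<le> x" by (simp add: field_simps mult.commute)
      then show "dyadic_uniform M \<omega> \<le> x" using dyadic_uniform_in_cell(2)[OF at \<omega>] by linarith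
    qed
    then have lower: "real k / 2^m \<le> prob ?S"
      using prob_Union_dyadic_cells[OF at k_le] finite_measure_mono[OF _ S_events] by metis
    have "?S \<subseteq> ?C m (min (k+1) (2^m))"
    proof safe
      fix \<omega> assume \<omega>: "\<omega> \<in> space M" "dyadic_uniform M \<omega> \<le> x"
      obtain j where j: "\<omega> \<in> dyadic_cell M m j" using dyadic_cell_cover[OF \<omega>(1)] .
      have "real j / 2^m \<le> x" using dyadic_uniform_in_cell(1)[OF at j] \<omega>(2) by linarith
      then have "real j \<le> 2^m * x" by (simp add: field_simps mult.commute)
      then have "j < k + 1" using k by linarith
      then show "\<omega> \<in> ?C m (min (k+1) (2^m))" using j dyadic_cell_index_less[OF at j] by auto
    qed
    then have "prob ?S \<le> prob (?C m (min (k+1) (2^m)))" by (rule finite_measure_mono[OF _ C_events])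
    also have "\<dots> = real (min (k+1) (2^m)) / 2^m" by (rule prob_Union_dyadic_cells[OF at]) simp
    finally have upper: "prob ?S \<le> real (min (k+1) (2^m)) / 2^m" .
    have "real (min (k+1) (2^m)) / 2^m \<le> x + (1/2)^m" "x \<le> real k / 2^m + (1/2)^m"
      using k by (simp_all add: field_simps power_divide)
    then show ?thesis using lower upper by linarith
  qed
  show ?thesis
    by (rule antisym; rule le_by_half_powers) (use approx in blast)+
qed

lemma ex_uniform_random_variable:
  assumes at: "atomless M"
  obtains U where "U \<in> borel_measurable M"
    "\<And>\<omega>. \<omega> \<in> space M \<Longrightarrow> 0 < U \<omega> \<and> U \<omega> < 1"
    "\<And>x. 0 \<le> x \<Longrightarrow> x \<le> 1 \<Longrightarrow> prob {\<omega> \<in> space M. U \<omega> \<le> x} = x"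
proof -
  let ?V = "dyadic_uniform M"
  have [measurable]: "?V \<in> borel_measurable M" using borel_measurable_dyadic_uniform[OF at] .
  have "1 \<le> prob {\<omega> \<in> space M. ?V \<omega> < 1} + (1/2)^m" for m
  proof -
    have "1 - (1/2)^m = prob {\<omega> \<in> space M. ?V \<omega> \<le> 1 - (1/2)^m}"
      by (rule prob_dyadic_uniform_le[OF at, symmetric]) (auto simp: power_le_one)
    also have "\<dots> \<le> prob {\<omega> \<in> space M. ?V \<omega> < 1}"
      using zero_less_power[of "1/2::real" m] by (intro finite_measure_mono) (auto simp del: zero_less_power)
    finally show ?thesis by simp
  qed
  then have "prob {\<omega> \<in> space M. ?V \<omega> < 1} = 1"
    using le_by_half_powers prob_le_1 antisym by (metis (no_types, lifting))
  then have "AE \<omega> in M. ?V \<omega> < 1" by (auto dest: AE_prob_1)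
  moreover have "AE \<omega> in M. \<omega> \<notin> {\<omega> \<in> space M. ?V \<omega> \<le> 0}"
    using prob_dyadic_uniform_le[OF at, of 0] prob_eq_0[of "{\<omega> \<in> space M. ?V \<omega> \<le> 0}"] by simp
  moreover have "AE \<omega> in M. \<omega> \<in> space M" by simp
  ultimately have AE_unit: "AE \<omega> in M. 0 < ?V \<omega> \<and> ?V \<omega> < 1" by eventually_elim auto
  define U where "U \<omega> = (if 0 < ?V \<omega> \<and> ?V \<omega> < 1 then ?V \<omega> else 1/2)" for \<omega>
  have [measurable]: "U \<in> borel_measurable M" unfolding U_def by measurable
  have "prob {\<omega> \<in> space M. U \<omega> \<le> x} = prob {\<omega> \<in> space M. ?V \<omega> \<le> x}" for x
    using AE_unit by (intro finite_measure_eq_AE) (auto simp: U_def)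
  with that[of U] show ?thesis by (simp add: U_def prob_dyadic_uniform_le[OF at])
qed

lemma ex_random_variable_distr:
  assumes at: "atomless M" and \<mu>: "real_distribution \<mu>"
  obtains W where "W \<in> borel_measurable M" "distr M borel W = \<mu>"
proof -
  interpret \<mu>: cdf_distribution \<mu> using \<mu> by (simp add: cdf_distribution_def)
  obtain U where [measurable]: "U \<in> borel_measurable M"
    and U_unit: "\<And>\<omega>. \<omega> \<in> space M \<Longrightarrow> 0 < U \<omega> \<and> U \<omega> < 1"
    and U_uniform: "\<And>x. 0 \<le> x \<Longrightarrow> x \<le> 1 \<Longrightarrow> prob {\<omega> \<in> space M. U \<omega> \<le> x} = x"
    using ex_uniform_random_variable[OF at] by blast
  define W where "W \<omega> = Inf {x. U \<omega> \<le> cdf \<mu> x}" for \<omega>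
  have W_le: "{\<omega> \<in> space M. W \<omega> \<le> x} = {\<omega> \<in> space M. U \<omega> \<le> cdf \<mu> x}" for x
    using \<mu>.pseudoinverse U_unit unfolding W_def by blast
  have W_measurable: "W \<in> borel_measurable M"
    unfolding borel_measurable_iff_le W_le by measurable
  have "cdf (distr M borel W) = cdf \<mu>"
  proof
    fix x
    have "cdf (distr M borel W) x = prob {\<omega> \<in> space M. W \<omega> \<le> x}"
      using W_measurable by (simp add: cdf_def measure_distr vimage_def Int_def conj_commute)
    also have "\<dots> = cdf \<mu> x"
      unfolding W_le using \<mu>.cdf_nonneg \<mu>.cdf_bounded_prob by (simp add: U_uniform)
    finally show "cdf (distr M borel W) x = cdf \<mu> x" .
  qed
  then have "distr M borel W = \<mu>" using W_measurable \<mu> by (intro cdf_unique) auto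
  with W_measurable that show ?thesis by blast
qed

lemma ex_random_vector_distr:
  assumes at: "atomless M" and \<nu>: "prob_space \<nu>" "sets \<nu> = sets (borel :: (real^'n) measure)"
  obtains Z :: "'a \<Rightarrow> real^'n" where "Z \<in> borel_measurable M" "distr M borel Z = \<nu>"
proof -
  obtain e :: "real^'n \<Rightarrow> real" and g where e: "e \<in> borel_measurable borel"
    and g: "g \<in> borel_measurable borel" and g_e: "\<And>x. g (e x) = x"
    using ex_borel_embedding_into_real by blast
  have e_\<nu>: "e \<in> borel_measurable \<nu>" using e \<nu>(2) by (simp cong: measurable_cong_sets)
  obtain W where W: "W \<in> borel_measurable M" "distr M borel W = distr \<nu> borel e"
    using ex_random_variable_distr[OF at prob_space.real_distribution_distr[OF \<nu>(1) e_\<nu>]] .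
  have "distr M borel (g \<circ> W) = distr (distr M borel W) borel g"
    using W(1) g by (simp add: distr_distr)
  also have "\<dots> = distr \<nu> borel (\<lambda>x. x)"
    using W e_\<nu> g by (simp add: distr_distr comp_def g_e)
  also have "\<dots> = \<nu>" using \<nu>(2) by (simp add: distr_id2)
  finally show ?thesis using that[of "g \<circ> W"] W g by simp
qed

end

section \<open>Mixtures, couplings and aggregation sets\<close>

definition mixture_measure :: "real \<Rightarrow> 'a measure \<Rightarrow> 'a measure \<Rightarrow> 'a measure" where
  "mixture_measure l M N =
    measure_of (space M) (sets M) (\<lambda>A. ennreal l * emeasure M A + ennreal (1 - l) * emeasure N A)"

lemma space_mixture_measure: "space (mixture_measure l M N) = space M"
  by (simp add: mixture_measure_def)

lemma sets_mixture_measure [measurable_cong]: "sets (mixture_measure l M N) = sets M"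
  by (simp add: mixture_measure_def)

lemma emeasure_mixture_measure:
  assumes "sets N = sets M" "A \<in> sets M"
  shows "emeasure (mixture_measure l M N) A = ennreal l * emeasure M A + ennreal (1 - l) * emeasure N A"
  unfolding mixture_measure_def
proof (rule emeasure_measure_of_sigma[OF sets.sigma_algebra_axioms _ _ assms(2)])
  show "positive (sets M) (\<lambda>A. ennreal l * emeasure M A + ennreal (1 - l) * emeasure N A)"
    by (simp add: positive_def)
  show "countably_additive (sets M) (\<lambda>A. ennreal l * emeasure M A + ennreal (1 - l) * emeasure N A)"
    using emeasure_countably_additive[of M] emeasure_countably_additive[of N] assms(1)
    by (simp add: countably_additive_def suminf_add[symmetric])
qed

lemma
  assumes "prob_space M" "prob_space N" "sets N = sets M" "0 \<le> l" "l \<le> 1"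
  shows prob_space_mixture_measure: "prob_space (mixture_measure l M N)"
    and measure_mixture_measure:
      "A \<in> sets M \<Longrightarrow> measure (mixture_measure l M N) A = l * measure M A + (1 - l) * measure N A"
proof -
  interpret M: prob_space M by fact
  interpret N: prob_space N by fact
  have emeasure_eq: "emeasure (mixture_measure l M N) A
      = ennreal (l * measure M A + (1 - l) * measure N A)" if "A \<in> sets M" for A
  proof -
    have "emeasure (mixture_measure l M N) A
        = ennreal l * ennreal (measure M A) + ennreal (1 - l) * ennreal (measure N A)"
      using that assms(3) by (simp add: emeasure_mixture_measure M.emeasure_eq_measure N.emeasure_eq_measure)
    also have "\<dots> = ennreal (l * measure M A) + ennreal ((1 - l) * measure N A)"
      using assms(4,5) by (simp add: ennreal_mult)
    also have "\<dots> = ennreal (l * measure M A + (1 - l) * measure N A)"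
      using assms(4,5) by (simp add: ennreal_plus)
    finally show ?thesis .
  qed
  show "measure (mixture_measure l M N) A = l * measure M A + (1 - l) * measure N A" if "A \<in> sets M"
    using assms(4,5) by (intro measure_eq_emeasure_eq_ennreal emeasure_eq that) simp
  have "measure N (space M) = 1" using sets_eq_imp_space_eq[OF assms(3)] N.prob_space by simp
  then show "prob_space (mixture_measure l M N)"
    by (intro prob_spaceI) (simp add: space_mixture_measure emeasure_eq M.prob_space)
qed

lemma cdf_distr_mixture_measure:
  assumes "prob_space M" "prob_space N" "sets N = sets M" "0 \<le> l" "l \<le> 1"
    and h: "h \<in> borel_measurable M"
  shows "cdf (distr (mixture_measure l M N) borel h) x
    = l * cdf (distr M borel h) x + (1 - l) * cdf (distr N borel h) x"
proof -
  have h_N: "h \<in> borel_measurable N" and h_mix: "h \<in> borel_measurable (mixture_measure l M N)"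
    using h assms(3) by (simp_all cong: measurable_cong_sets add: sets_mixture_measure)
  have A: "h -` {..x} \<inter> space M \<in> sets M" using h by measurable
  have "cdf (distr (mixture_measure l M N) borel h) x = measure (mixture_measure l M N) (h -` {..x} \<inter> space M)"
    by (simp add: cdf_def measure_distr[OF h_mix] space_mixture_measure)
  also have "\<dots> = l * measure M (h -` {..x} \<inter> space M) + (1 - l) * measure N (h -` {..x} \<inter> space M)"
    using measure_mixture_measure[OF assms(1-5) A] .
  also have "\<dots> = l * cdf (distr M borel h) x + (1 - l) * cdf (distr N borel h) x"
    using sets_eq_imp_space_eq[OF assms(3)] by (simp add: cdf_def measure_distr[OF h] measure_distr[OF h_N])
  finally show ?thesis .
qed

definition couplings :: "('n \<Rightarrow> real \<Rightarrow> real) \<Rightarrow> (real^'n) measure set" where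
  "couplings F = {\<nu>. prob_space \<nu> \<and> sets \<nu> = sets borel
    \<and> (\<forall>i. cdf (distr \<nu> borel (\<lambda>x. x $ i)) = F i)}"

lemma mixture_measure_in_couplings:
  assumes "\<nu> \<in> couplings F" "\<nu>' \<in> couplings G" "0 \<le> l" "l \<le> 1"
  shows "mixture_measure l \<nu> \<nu>' \<in> couplings (mix_tuple l F G)"
  using assms by (auto simp: couplings_def mix_tuple_def sets_mixture_measure
    prob_space_mixture_measure cdf_distr_mixture_measure)

lemma (in prob_space) agg_set_eq_couplings:
  fixes f :: "real^'n \<Rightarrow> real"
  assumes at: "atomless M" and f: "f \<in> borel_measurable borel"
  shows "agg_set M f F = (\<lambda>\<nu>. cdf (distr \<nu> borel f)) ` couplings F"
proof (intro equalityI subsetI)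
  fix H assume "H \<in> agg_set M f F"
  then obtain X where H: "H = cdf (distr M borel (\<lambda>\<omega>. f (\<chi> i. X i \<omega>)))"
    and X: "\<And>i. X i \<in> borel_measurable M" "\<And>i. cdf (distr M borel (X i)) = F i"
    unfolding agg_set_def by blast
  define V where "V \<omega> = (\<chi> i. X i \<omega>)" for \<omega>
  have V: "V \<in> borel_measurable M" unfolding V_def by (rule borel_measurable_vecI) (simp add: X)
  have "distr (distr M borel V) borel (\<lambda>x. x $ i) = distr M borel (X i)" for i
    using V by (simp add: distr_distr comp_def V_def)
  then have "distr M borel V \<in> couplings F"
    using V X(2) by (simp add: couplings_def prob_space_distr)
  moreover have "H = cdf (distr (distr M borel V) borel f)"
    using V f by (simp add: H distr_distr comp_def V_def)
  ultimately show "H \<in> (\<lambda>\<nu>. cdf (distr \<nu> borel f)) ` couplings F" by blast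
next
  fix H assume "H \<in> (\<lambda>\<nu>. cdf (distr \<nu> borel f)) ` couplings F"
  then obtain \<nu> where H: "H = cdf (distr \<nu> borel f)" and \<nu>: "\<nu> \<in> couplings F" by blast
  then obtain Z :: "'a \<Rightarrow> real^'n" where Z: "Z \<in> borel_measurable M" "distr M borel Z = \<nu>"
    using ex_random_vector_distr[OF at] unfolding couplings_def by blast
  define X where "X i = (\<lambda>\<omega>. Z \<omega> $ i)" for i
  have X: "X i \<in> borel_measurable M" for i unfolding X_def using Z(1) by measurable
  have "cdf (distr M borel (X i)) = F i" for i
    using \<nu> Z by (auto simp: couplings_def X_def distr_distr comp_def)
  moreover have "H = cdf (distr M borel (\<lambda>\<omega>. f (\<chi> i. X i \<omega>)))"
    using Z(1) f by (simp add: H X_def Z(2)[symmetric] distr_distr comp_def vec_lambda_eta)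
  ultimately show "H \<in> agg_set M f F" unfolding agg_set_def using X by blast
qed

lemma (in prob_space) mix_set_agg_set_subset:
  fixes f :: "real^'n \<Rightarrow> real"
  assumes "atomless M" "f \<in> borel_measurable borel" "0 \<le> l" "l \<le> 1"
  shows "mix_set l (agg_set M f F) (agg_set M f G) \<subseteq> agg_set M f (mix_tuple l F G)"
proof
  fix H assume "H \<in> mix_set l (agg_set M f F) (agg_set M f G)"
  then obtain \<nu> \<nu>' where \<nu>: "\<nu> \<in> couplings F" "\<nu>' \<in> couplings G"
    and H: "H = (\<lambda>x. l * cdf (distr \<nu> borel f) x + (1 - l) * cdf (distr \<nu>' borel f) x)"
    unfolding mix_set_def agg_set_eq_couplings[OF assms(1,2)] by blast
  have "f \<in> borel_measurable \<nu>" using \<nu>(1) assms(2) by (simp add: couplings_def cong: measurable_cong_sets)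
  then have "cdf (distr (mixture_measure l \<nu> \<nu>') borel f) x
      = l * cdf (distr \<nu> borel f) x + (1 - l) * cdf (distr \<nu>' borel f) x" for x
    using \<nu> assms(3,4) by (intro cdf_distr_mixture_measure) (auto simp: couplings_def)
  then have "H = cdf (distr (mixture_measure l \<nu> \<nu>') borel f)" by (simp add: H fun_eq_iff)
  then show "H \<in> agg_set M f (mix_tuple l F G)"
    unfolding agg_set_eq_couplings[OF assms(1,2)]
    using mixture_measure_in_couplings[OF \<nu> assms(3,4)] by blast
qed

lemma agg_set_permute_subset:
  assumes sym: "symmetric_fun f" and \<pi>: "bij \<pi>"
  shows "agg_set P f F \<subseteq> agg_set P f (\<lambda>i. F (\<pi> i))"
proof
  fix H assume "H \<in> agg_set P f F"
  then obtain X where H: "H = cdf (distr P borel (\<lambda>\<omega>. f (\<chi> i. X i \<omega>)))"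
    and X: "\<forall>i. X i \<in> borel_measurable P \<and> cdf (distr P borel (X i)) = F i"
    unfolding agg_set_def by blast
  have "f (\<chi> i. (\<chi> j. X j \<omega>) $ \<pi> i) = f (\<chi> j. X j \<omega>)" for \<omega>
    using sym \<pi> unfolding symmetric_fun_def by blast
  then have "\<exists>Y. H = cdf (distr P borel (\<lambda>\<omega>. f (\<chi> i. Y i \<omega>)))
      \<and> (\<forall>i. Y i \<in> borel_measurable P \<and> cdf (distr P borel (Y i)) = F (\<pi> i))"
    using H X by (intro exI[of _ "\<lambda>i. X (\<pi> i)"]) simp
  then show "H \<in> agg_set P f (\<lambda>i. F (\<pi> i))" unfolding agg_set_def by blast
qed

lemma Int_subset_mix_set: "A \<inter> B \<subseteq> mix_set l A B"
proof
  fix H assume "H \<in> A \<inter> B"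
  moreover have "H = (\<lambda>x. l * H x + (1 - l) * H x)" by (simp add: algebra_simps)
  ultimately show "H \<in> mix_set l A B" unfolding mix_set_def by blast
qed

theorem lemma1:
  fixes P :: "'a measure" and f :: "real^'n \<Rightarrow> real"
    and F G :: "'n \<Rightarrow> real \<Rightarrow> real" and l :: real and \<pi> :: "'n \<Rightarrow> 'n"
  assumes "prob_space P" and "atomless P"
    and "f \<in> borel_measurable borel" and "symmetric_fun f"
    and "\<forall>i. is_cdf (F i)" and "\<forall>i. is_cdf (G i)"
    and "0 \<le> l" and "l \<le> 1" and "bij \<pi>"
  shows "agg_set P f F = agg_set P f (\<lambda>i. F (\<pi> i))
    \<and> mix_set l (agg_set P f F) (agg_set P f G) \<subseteq> agg_set P f (mix_tuple l F G)
    \<and> mix_set l (agg_set P f F) (agg_set P f F) = agg_set P f F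
    \<and> agg_set P f F \<inter> agg_set P f G \<subseteq> agg_set P f (mix_tuple l F G)"
proof (intro conjI)
  have "agg_set P f (\<lambda>i. F (\<pi> i)) \<subseteq> agg_set P f (\<lambda>i. F (\<pi> (inv \<pi> i)))"
    using agg_set_permute_subset[OF assms(4) bij_imp_bij_inv[OF assms(9)]] .
  also have "(\<lambda>i. F (\<pi> (inv \<pi> i))) = F"
    using assms(9) by (simp add: bij_is_surj surj_f_inv_f)
  finally show "agg_set P f F = agg_set P f (\<lambda>i. F (\<pi> i))"
    using agg_set_permute_subset[OF assms(4,9)] by blast
  note mix_subset = prob_space.mix_set_agg_set_subset[OF assms(1,2,3,7,8)]
  show "mix_set l (agg_set P f F) (agg_set P f G) \<subseteq> agg_set P f (mix_tuple l F G)"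
    by (rule mix_subset)
  have "mix_tuple l F F = F" by (simp add: mix_tuple_def algebra_simps)
  then show "mix_set l (agg_set P f F) (agg_set P f F) = agg_set P f F"
    using mix_subset[of F F] Int_subset_mix_set[of "agg_set P f F" "agg_set P f F" l] by auto
  show "agg_set P f F \<inter> agg_set P f G \<subseteq> agg_set P f (mix_tuple l F G)"
    using Int_subset_mix_set mix_subset by blast
qed

end
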